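(* Let $L\subseteq\mathbb{R}^m$ be a lattice with covering radius $R$, and let $C\subseteq\mathbb{R}^m/L$ be finite. The following are equivalent: (i) $C$ is holy; (ii) for every $x,y\in C$ with $x\neq y$, $d(x,y)=R$; (iii) $\min\{d(x,y):x,y\in C,x\neq y\}=R$. Furthermore, (a) every holy code in $\mathbb{R}^m/L$ is optimal, and (b) if there exists a holy code of size $n$ in $\mathbb{R}^m/L$, then every optimal code of size $n$ in $\mathbb{R}^m/L$ is a holy code.
   Context: A lattice is a discrete full-rank subgroup of $\mathbb{R}^m$. The torus $\mathbb{R}^m/L$ has metric $d(x,y):=\min\{\|s-t\|_2:s\in x,t\in y\}$. An optimal code of size $n$ is an $n$-element subset of $\mathbb{R}^m/L$ maximizing the minimum distance between distinct points. The covering radius $R$ of $L$ is the supremum of $r$ such that $\mathbb{R}^m\setminus\bigcup_{x\in L}B(x,r)$ is nonempty; $z\in\mathbb{R}^m$ is a deep hole of $L$ if $\min\{\|z-x\|_2:x\in L\}=R$. A code $C=\{s+L:s\in S\}$ (with $S$ a set of representatives of distinct cosets) is holy if for all $s,t\in S$ with $s\neq t$, $s-t$ is a deep hole of $L$. *)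

theory Defs
  imports "HOL-Analysis.Analysis"
begin

definition is_lattice :: "'a::euclidean_space set \<Rightarrow> bool" where
  "is_lattice L \<longleftrightarrow>
     0 \<in> L \<and> (\<forall>x\<in>L. \<forall>y\<in>L. x + y \<in> L) \<and> (\<forall>x\<in>L. - x \<in> L) \<and>
     (\<exists>e>0. \<forall>x\<in>L. x \<noteq> 0 \<longrightarrow> e \<le> norm x) \<and>
     span L = UNIV"

text \<open>The coset s + L, i.e. the point of the torus represented by s.\<close>
definition coset :: "'a::euclidean_space set \<Rightarrow> 'a \<Rightarrow> 'a set" where
  "coset L s = (\<lambda>l. s + l) ` L"

definition torus :: "'a::euclidean_space set \<Rightarrow> 'a set set" where
  "torus L = range (coset L)"

definition tdist :: "'a::euclidean_space set \<Rightarrow> 'a set \<Rightarrow> real" where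
  "tdist x y = Inf {norm (s - t) | s t. s \<in> x \<and> t \<in> y}"

definition covering_radius :: "'a::euclidean_space set \<Rightarrow> real" where
  "covering_radius L = Sup {r. UNIV - (\<Union>x\<in>L. ball x r) \<noteq> {}}"

definition deep_hole :: "'a::euclidean_space set \<Rightarrow> 'a \<Rightarrow> bool" where
  "deep_hole L z \<longleftrightarrow> Inf {norm (z - x) | x. x \<in> L} = covering_radius L"

definition holy :: "'a::euclidean_space set \<Rightarrow> 'a set set \<Rightarrow> bool" where
  "holy L C \<longleftrightarrow> (\<exists>S. C = coset L ` S \<and> inj_on (coset L) S \<and>
      (\<forall>s\<in>S. \<forall>t\<in>S. s \<noteq> t \<longrightarrow> deep_hole L (s - t)))"

definition min_dist :: "'a::euclidean_space set set \<Rightarrow> real" where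
  "min_dist C = Inf {tdist x y | x y. x \<in> C \<and> y \<in> C \<and> x \<noteq> y}"

definition optimal_code :: "'a::euclidean_space set \<Rightarrow> nat \<Rightarrow> 'a set set \<Rightarrow> bool" where
  "optimal_code L n C \<longleftrightarrow> C \<subseteq> torus L \<and> finite C \<and> card C = n \<and>
     (\<forall>C'. C' \<subseteq> torus L \<and> finite C' \<and> card C' = n \<longrightarrow> min_dist C' \<le> min_dist C)"

end

theory Submission
  imports Defs
begin

text \<open>The distance between the points s + L and t + L of the torus is the distance from s - t
  to L, and the distance from any point to L is at most the covering radius R, with equality
  exactly at the deep holes. Hence a code is holy iff all its pairwise distances equal R, iff
  its minimum distance equals R, since no pairwise distance exceeds R. The same bound shows that
  no code with at least two points has minimum distance above R, so a holy code is optimal, and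
  an optimal code of the size of a holy code has minimum distance R and is therefore holy.\<close>

lemma lattice_zero: "is_lattice L \<Longrightarrow> 0 \<in> L"
  unfolding is_lattice_def by blast

lemma lattice_add: "is_lattice L \<Longrightarrow> x \<in> L \<Longrightarrow> y \<in> L \<Longrightarrow> x + y \<in> L"
  unfolding is_lattice_def by blast

lemma lattice_uminus: "is_lattice L \<Longrightarrow> x \<in> L \<Longrightarrow> - x \<in> L"
  unfolding is_lattice_def by blast

lemma lattice_diff: "is_lattice L \<Longrightarrow> x \<in> L \<Longrightarrow> y \<in> L \<Longrightarrow> x - y \<in> L"
  using lattice_add[of L x "- y"] lattice_uminus[of L y] by simp

lemma lattice_scaleR_of_int:
  assumes "is_lattice L" "b \<in> L"
  shows "of_int k *\<^sub>R b \<in> L"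
proof (induction k rule: int_induct[where k = 0])
  case base
  show ?case using lattice_zero[OF assms(1)] by simp
next
  case (step1 i)
  have "of_int (i + 1) *\<^sub>R b = of_int i *\<^sub>R b + b" by (simp add: scaleR_left_distrib)
  then show ?case using lattice_add[OF assms(1) step1(2) assms(2)] by simp
next
  case (step2 i)
  have "of_int (i - 1) *\<^sub>R b = of_int i *\<^sub>R b - b" by (simp add: scaleR_left_diff_distrib)
  then show ?case using lattice_diff[OF assms(1) step2(2) assms(2)] by simp
qed

lemma lattice_sum:
  assumes "is_lattice L" "\<And>b. b \<in> B \<Longrightarrow> f b \<in> L"
  shows "sum f B \<in> L"
  using assms(2)
  by (induction B rule: infinite_finite_induct)
    (auto simp: lattice_zero[OF assms(1)] lattice_add[OF assms(1)])

text \<open>Round the coordinates of a point with respect to a basis of the space contained in L.\<close>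
lemma lattice_covering_bounded:
  fixes L :: "'a::euclidean_space set"
  assumes "is_lattice L"
  obtains Bd where "\<And>z. \<exists>x\<in>L. dist z x \<le> Bd"
proof -
  obtain B where B: "B \<subseteq> L" "independent B" "L \<subseteq> span B"
    using maximal_independent_subset by blast
  have "finite B" using B(2) finiteI_independent by blast
  have "span B = UNIV"
    using span_minimal[OF B(3) subspace_span] assms unfolding is_lattice_def by auto
  have "\<exists>x\<in>L. dist z x \<le> (\<Sum>v\<in>B. norm v)" for z
  proof -
    obtain u where u: "z = (\<Sum>v\<in>B. u v *\<^sub>R v)"
      using \<open>span B = UNIV\<close> span_finite[OF \<open>finite B\<close>] by auto
    define x where "x = (\<Sum>v\<in>B. of_int \<lfloor>u v\<rfloor> *\<^sub>R v)"
    have "x \<in> L"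
      unfolding x_def using B(1) by (intro lattice_sum[OF assms] lattice_scaleR_of_int[OF assms]) auto
    have "dist z x = norm (\<Sum>v\<in>B. (u v - of_int \<lfloor>u v\<rfloor>) *\<^sub>R v)"
      unfolding u x_def dist_norm by (simp add: sum_subtractf scaleR_diff_left)
    also have "\<dots> \<le> (\<Sum>v\<in>B. norm ((u v - of_int \<lfloor>u v\<rfloor>) *\<^sub>R v))"
      by (rule norm_sum)
    also have "\<dots> \<le> (\<Sum>v\<in>B. norm v)"
    proof (rule sum_mono)
      fix v
      have "\<bar>u v - of_int \<lfloor>u v\<rfloor>\<bar> \<le> 1" by linarith
      then show "norm ((u v - of_int \<lfloor>u v\<rfloor>) *\<^sub>R v) \<le> norm v"
        by (simp add: mult_left_le_one_le)
    qed
    finally show ?thesis using \<open>x \<in> L\<close> by blast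
  qed
  then show ?thesis using that by blast
qed

lemma Inf_norm_diff_eq_infdist:
  fixes L :: "'a::real_normed_vector set"
  assumes "L \<noteq> {}"
  shows "Inf {norm (z - x) | x. x \<in> L} = infdist z L"
proof -
  have "{norm (z - x) | x. x \<in> L} = (\<lambda>x. dist z x) ` L"
    by (simp add: dist_norm Setcompr_eq_image)
  then show ?thesis using assms by (simp add: infdist_notempty)
qed

lemma deep_hole_iff_infdist:
  assumes "is_lattice L"
  shows "deep_hole L z \<longleftrightarrow> infdist z L = covering_radius L"
proof -
  have "L \<noteq> {}" using lattice_zero[OF assms] by blast
  then show ?thesis unfolding deep_hole_def by (simp add: Inf_norm_diff_eq_infdist)
qed

lemma infdist_le_covering_radius:
  fixes L :: "'a::euclidean_space set"
  assumes "is_lattice L"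
  shows "infdist z L \<le> covering_radius L"
proof -
  let ?A = "{r. UNIV - (\<Union>x\<in>L. ball x r) \<noteq> {}}"
  obtain Bd where Bd: "\<And>z. \<exists>x\<in>L. dist z x \<le> Bd"
    using lattice_covering_bounded[OF assms] by blast
  have "bdd_above ?A"
  proof (rule bdd_aboveI)
    fix r assume "r \<in> ?A"
    then obtain w where "w \<notin> (\<Union>x\<in>L. ball x r)" by blast
    then have w: "r \<le> dist x w" if "x \<in> L" for x using that by (auto simp: not_less)
    obtain x where "x \<in> L" "dist w x \<le> Bd" using Bd by blast
    then show "r \<le> Bd" using w[of x] by (simp add: dist_commute)
  qed
  moreover have "z \<notin> ball x (infdist z L)" if "x \<in> L" for x
    using infdist_le[OF that, of z] by (simp add: dist_commute)
  then have "infdist z L \<in> ?A" by blast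
  ultimately show ?thesis unfolding covering_radius_def by (rule cSup_upper[rotated])
qed

lemma tdist_coset:
  fixes L :: "'a::euclidean_space set"
  assumes "is_lattice L"
  shows "tdist (coset L s) (coset L t) = infdist (s - t) L"
proof -
  have "{norm (a - b) | a b. a \<in> coset L s \<and> b \<in> coset L t} = {norm (s - t - x) | x. x \<in> L}"
  proof (intro equalityI subsetI)
    fix r assume "r \<in> {norm (a - b) | a b. a \<in> coset L s \<and> b \<in> coset L t}"
    then obtain l l' where "l \<in> L" "l' \<in> L" "r = norm ((s + l) - (t + l'))"
      unfolding coset_def by auto
    moreover have "(s + l) - (t + l') = s - t - (l' - l)" by (simp add: algebra_simps)
    ultimately show "r \<in> {norm (s - t - x) | x. x \<in> L}"
      using lattice_diff[OF assms] by auto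
  next
    fix r assume "r \<in> {norm (s - t - x) | x. x \<in> L}"
    then obtain x where "x \<in> L" "r = norm ((s + 0) - (t + x))" by (auto simp: algebra_simps)
    then show "r \<in> {norm (a - b) | a b. a \<in> coset L s \<and> b \<in> coset L t}"
      using lattice_zero[OF assms] unfolding coset_def by blast
  qed
  then show ?thesis
    unfolding tdist_def using Inf_norm_diff_eq_infdist lattice_zero[OF assms] by auto
qed

lemma tdist_le_covering_radius:
  fixes L :: "'a::euclidean_space set"
  assumes "is_lattice L" "x \<in> torus L" "y \<in> torus L"
  shows "tdist x y \<le> covering_radius L"
  using assms tdist_coset[OF assms(1)] infdist_le_covering_radius[OF assms(1)]
  unfolding torus_def by auto

lemma holy_iff_tdist_eq_covering_radius:
  fixes L :: "'a::euclidean_space set"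
  assumes "is_lattice L" "C \<subseteq> torus L"
  shows "holy L C \<longleftrightarrow> (\<forall>x\<in>C. \<forall>y\<in>C. x \<noteq> y \<longrightarrow> tdist x y = covering_radius L)"
    (is "_ \<longleftrightarrow> ?equidistant")
proof -
  have deep_hole_iff: "deep_hole L (s - t) \<longleftrightarrow> tdist (coset L s) (coset L t) = covering_radius L"
    for s t
    using deep_hole_iff_infdist[OF assms(1)] tdist_coset[OF assms(1)] by simp
  show ?thesis
  proof
    assume "holy L C"
    then obtain S where S: "C = coset L ` S" "\<forall>s\<in>S. \<forall>t\<in>S. s \<noteq> t \<longrightarrow> deep_hole L (s - t)"
      unfolding holy_def by blast
    show ?equidistant
    proof (intro ballI impI)
      fix x y assume "x \<in> C" "y \<in> C" "x \<noteq> y"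
      then obtain s t where "s \<in> S" "t \<in> S" "x = coset L s" "y = coset L t" "s \<noteq> t"
        using S(1) by blast
      then show "tdist x y = covering_radius L" using S(2) deep_hole_iff by blast
    qed
  next
    assume equidistant: ?equidistant
    have "\<forall>x\<in>C. \<exists>s. coset L s = x" using assms(2) unfolding torus_def by blast
    then obtain rep where rep: "\<And>x. x \<in> C \<Longrightarrow> coset L (rep x) = x" by metis
    have "C = coset L ` rep ` C" using rep by (force simp: image_image)
    moreover have "inj_on (coset L) (rep ` C)" using rep by (auto simp: inj_on_def)
    moreover have "deep_hole L (s - t)" if st: "s \<in> rep ` C" "t \<in> rep ` C" "s \<noteq> t" for s t
    proof -
      obtain x y where "x \<in> C" "y \<in> C" "s = rep x" "t = rep y" using st by blast
      moreover from this have "x \<noteq> y" using \<open>s \<noteq> t\<close> by blast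
      ultimately show ?thesis using equidistant rep deep_hole_iff by metis
    qed
    ultimately show "holy L C" unfolding holy_def by blast
  qed
qed

lemma finite_tdist_pairs:
  "finite C \<Longrightarrow> finite {tdist x y | x y. x \<in> C \<and> y \<in> C \<and> x \<noteq> y}"
  by (rule finite_subset[of _ "case_prod tdist ` (C \<times> C)"]) auto

lemma min_dist_le_tdist:
  assumes "finite C" "x \<in> C" "y \<in> C" "x \<noteq> y"
  shows "min_dist C \<le> tdist x y"
  unfolding min_dist_def using assms bdd_below_finite[OF finite_tdist_pairs[OF assms(1)]]
  by (intro cInf_lower) auto

lemma min_dist_attained:
  assumes "finite C" "card C \<ge> 2"
  obtains x y where "x \<in> C" "y \<in> C" "x \<noteq> y" "min_dist C = tdist x y"
proof -
  let ?D = "{tdist x y | x y. x \<in> C \<and> y \<in> C \<and> x \<noteq> y}"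
  have "\<exists>x\<in>C. \<exists>y\<in>C. x \<noteq> y"
    using assms card_le_Suc0_iff_eq[OF assms(1)] by auto
  then have "?D \<noteq> {}" by blast
  note D = finite_tdist_pairs[OF assms(1)] this
  have "min_dist C = Min ?D" unfolding min_dist_def by (rule cInf_eq_Min[OF D])
  moreover have "Min ?D \<in> ?D" by (rule Min_in[OF D])
  ultimately show ?thesis using that by auto
qed

text \<open>Codes with at most one point all share the junk minimum distance \<open>Inf {}\<close>.\<close>
lemma min_dist_card_le_1:
  assumes "finite C" "card C \<le> 1"
  shows "min_dist C = Inf {}"
proof -
  have "{tdist x y | x y. x \<in> C \<and> y \<in> C \<and> x \<noteq> y} = {}"
    using assms card_le_Suc0_iff_eq[OF assms(1)] by auto
  then show ?thesis unfolding min_dist_def by (rule arg_cong)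
qed

lemma min_dist_eq_iff_all_tdist_eq:
  assumes "finite C" "card C \<ge> 2" "\<And>x y. x \<in> C \<Longrightarrow> y \<in> C \<Longrightarrow> x \<noteq> y \<Longrightarrow> tdist x y \<le> r"
  shows "min_dist C = r \<longleftrightarrow> (\<forall>x\<in>C. \<forall>y\<in>C. x \<noteq> y \<longrightarrow> tdist x y = r)"
proof
  assume "min_dist C = r"
  then show "\<forall>x\<in>C. \<forall>y\<in>C. x \<noteq> y \<longrightarrow> tdist x y = r"
    using min_dist_le_tdist[OF assms(1)] assms(3) by (blast intro: order_antisym)
next
  assume "\<forall>x\<in>C. \<forall>y\<in>C. x \<noteq> y \<longrightarrow> tdist x y = r"
  moreover obtain x y where "x \<in> C" "y \<in> C" "x \<noteq> y" "min_dist C = tdist x y"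
    using min_dist_attained[OF assms(1,2)] .
  ultimately show "min_dist C = r" by simp
qed

lemma min_dist_le_covering_radius:
  fixes L :: "'a::euclidean_space set"
  assumes "is_lattice L" "C \<subseteq> torus L" "finite C" "card C \<ge> 2"
  shows "min_dist C \<le> covering_radius L"
proof -
  obtain x y where "x \<in> C" "y \<in> C" "min_dist C = tdist x y"
    using min_dist_attained[OF assms(3,4)] by blast
  then show ?thesis using tdist_le_covering_radius[OF assms(1)] assms(2) by auto
qed

lemma equidistant_iff_min_dist_eq_covering_radius:
  fixes L :: "'a::euclidean_space set"
  assumes "is_lattice L" "C \<subseteq> torus L" "finite C" "card C \<ge> 2"
  shows "(\<forall>x\<in>C. \<forall>y\<in>C. x \<noteq> y \<longrightarrow> tdist x y = covering_radius L) \<longleftrightarrow>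
         min_dist C = covering_radius L"
proof -
  have bound: "tdist x y \<le> covering_radius L" if "x \<in> C" "y \<in> C" for x y
    using that assms(2) tdist_le_covering_radius[OF assms(1)] by blast
  show ?thesis by (simp only: min_dist_eq_iff_all_tdist_eq[OF assms(3,4) bound])
qed

lemma holy_iff_min_dist_eq_covering_radius:
  fixes L :: "'a::euclidean_space set"
  assumes "is_lattice L" "C \<subseteq> torus L" "finite C" "card C \<ge> 2"
  shows "holy L C \<longleftrightarrow> min_dist C = covering_radius L"
  using holy_iff_tdist_eq_covering_radius[OF assms(1,2)]
    equidistant_iff_min_dist_eq_covering_radius[OF assms] by simp

lemma holy_card_le_1:
  fixes L :: "'a::euclidean_space set"
  assumes "is_lattice L" "C \<subseteq> torus L" "finite C" "card C \<le> 1"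
  shows "holy L C"
  using holy_iff_tdist_eq_covering_radius[OF assms(1,2)] card_le_Suc0_iff_eq[OF assms(3)] assms(4)
  by auto

lemma holy_imp_optimal_code:
  fixes L :: "'a::euclidean_space set"
  assumes "is_lattice L" "C \<subseteq> torus L" "finite C" "holy L C"
  shows "optimal_code L (card C) C"
proof -
  have "min_dist C' \<le> min_dist C"
    if "C' \<subseteq> torus L" "finite C'" "card C' = card C" for C'
  proof (cases "card C \<ge> 2")
    case True
    then show ?thesis
      using holy_iff_min_dist_eq_covering_radius[OF assms(1-3)] assms(4)
        min_dist_le_covering_radius[OF assms(1) that(1,2)] that(3) by simp
  next
    case False
    then show ?thesis
      using min_dist_card_le_1[of C] min_dist_card_le_1[of C'] that(2,3) assms(3) by simp
  qed
  then show ?thesis unfolding optimal_code_def using assms(2,3) by blast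
qed

lemma optimal_code_holy_if_holy_of_same_card:
  fixes L :: "'a::euclidean_space set"
  assumes "is_lattice L" "H \<subseteq> torus L" "finite H" "card H = n" "holy L H"
    and "optimal_code L n C"
  shows "holy L C"
proof -
  have C: "C \<subseteq> torus L" "finite C" "card C = n" and "min_dist H \<le> min_dist C"
    using assms(2-4,6) unfolding optimal_code_def by auto
  show ?thesis
  proof (cases "n \<ge> 2")
    case True
    then have "min_dist H = covering_radius L"
      using holy_iff_min_dist_eq_covering_radius[OF assms(1-3)] assms(4,5) by simp
    then have "min_dist C = covering_radius L"
      using \<open>min_dist H \<le> min_dist C\<close> min_dist_le_covering_radius[OF assms(1) C(1,2)] C(3) True
      by simp
    then show ?thesis using holy_iff_min_dist_eq_covering_radius[OF assms(1) C(1,2)] C(3) True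
      by simp
  next
    case False
    then show ?thesis using holy_card_le_1[OF assms(1) C(1,2)] C(3) by simp
  qed
qed

theorem lemma4p9:
  fixes L :: "'a::euclidean_space set"
  assumes "is_lattice L"
  shows "(\<forall>C. C \<subseteq> torus L \<and> finite C \<longrightarrow>
            (holy L C \<longleftrightarrow> (\<forall>x\<in>C. \<forall>y\<in>C. x \<noteq> y \<longrightarrow> tdist x y = covering_radius L)) \<and>
            (card C \<ge> 2 \<longrightarrow>
               ((\<forall>x\<in>C. \<forall>y\<in>C. x \<noteq> y \<longrightarrow> tdist x y = covering_radius L) \<longleftrightarrow>
                min_dist C = covering_radius L)))
       \<and> (\<forall>C. C \<subseteq> torus L \<and> finite C \<and> holy L C \<longrightarrow> optimal_code L (card C) C)
       \<and> (\<forall>n. (\<exists>C. C \<subseteq> torus L \<and> finite C \<and> card C = n \<and> holy L C) \<longrightarrow>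
              (\<forall>C. optimal_code L n C \<longrightarrow> holy L C))"
proof (intro conjI allI impI; (elim conjE exE)?)
  fix C :: "'a set set"
  assume "C \<subseteq> torus L"
  then show "holy L C \<longleftrightarrow> (\<forall>x\<in>C. \<forall>y\<in>C. x \<noteq> y \<longrightarrow> tdist x y = covering_radius L)"
    by (rule holy_iff_tdist_eq_covering_radius[OF assms])
next
  fix C :: "'a set set"
  assume "C \<subseteq> torus L" "finite C" "card C \<ge> 2"
  then show "(\<forall>x\<in>C. \<forall>y\<in>C. x \<noteq> y \<longrightarrow> tdist x y = covering_radius L) \<longleftrightarrow>
      min_dist C = covering_radius L"
    by (rule equidistant_iff_min_dist_eq_covering_radius[OF assms])
next
  fix C :: "'a set set"
  assume "C \<subseteq> torus L" "finite C" "holy L C"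
  then show "optimal_code L (card C) C" by (rule holy_imp_optimal_code[OF assms])
next
  fix n and C H :: "'a set set"
  assume "H \<subseteq> torus L" "finite H" "card H = n" "holy L H" "optimal_code L n C"
  then show "holy L C" by (rule optimal_code_holy_if_holy_of_same_card[OF assms])
qed

end
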